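(* Let $m\ge 1$ and let $f_i(z)=a_iz+b_i$, $i=1,\dots,m$, with $a_i,b_i\in\mathbb{C}$ and $0<|a_i|<1$, and let $K\subset\mathbb{C}$ be the attractor of the iterated function system $\{f_1,\dots,f_m\}$. Suppose $K$ is not a singleton. If an eventually periodic word $i_1i_2\cdots i_l(j_1\cdots j_k)^\infty\in\{1,\dots,m\}^{\mathbb{N}}$ is a coding of an extreme point of the convex hull $\mathrm{co}(K)$, then $a_{j_1}a_{j_2}\cdots a_{j_k}$ is a positive real number.
   Context: The attractor $K$ is the unique nonempty compact set with $K=\bigcup_{i=1}^m f_i(K)$. For a word $i_1i_2\cdots$ write $f_{i_1\cdots i_n}=f_{i_1}\circ\cdots\circ f_{i_n}$. If $\bigcap_{n\ge1} f_{i_1\cdots i_n}(K)=\{z\}$, the infinite word $i_1i_2\cdots$ is called a coding of the point $z\in K$. The notation $(j_1\cdots j_k)^\infty$ denotes infinite repetition of the block $j_1\cdots j_k$. *)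

theory Defs
  imports "HOL-Analysis.Analysis"
begin

definition aff :: "(nat \<Rightarrow> complex) \<Rightarrow> (nat \<Rightarrow> complex) \<Rightarrow> nat \<Rightarrow> complex \<Rightarrow> complex" where
  "aff a b i = (\<lambda>z. a i * z + b i)"

definition is_attractor :: "nat \<Rightarrow> (nat \<Rightarrow> complex) \<Rightarrow> (nat \<Rightarrow> complex) \<Rightarrow> complex set \<Rightarrow> bool" where
  "is_attractor m a b K \<longleftrightarrow> K \<noteq> {} \<and> compact K \<and> K = (\<Union>i\<in>{1..m}. aff a b i ` K)"

text \<open>word_comp a b w n = f_{w 0} o f_{w 1} o ... o f_{w (n-1)} (the word is indexed from 0).\<close>
fun word_comp :: "(nat \<Rightarrow> complex) \<Rightarrow> (nat \<Rightarrow> complex) \<Rightarrow> (nat \<Rightarrow> nat) \<Rightarrow> nat \<Rightarrow> complex \<Rightarrow> complex" where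
  "word_comp a b w 0 = id"
| "word_comp a b w (Suc n) = word_comp a b w n \<circ> aff a b (w n)"

definition is_coding :: "(nat \<Rightarrow> complex) \<Rightarrow> (nat \<Rightarrow> complex) \<Rightarrow> complex set \<Rightarrow> (nat \<Rightarrow> nat) \<Rightarrow> complex \<Rightarrow> bool" where
  "is_coding a b K w z \<longleftrightarrow> (\<Inter>n\<in>{1..}. word_comp a b w n ` K) = {z}"

end

(* The period map H = f_{j_1...j_k} is a contracting similarity H y = p + A (y - p) with
   A = a_{j_1}...a_{j_k}; its centre p lies in K and the injective affine map f_{i_1...i_l}
   sends p to the coded extreme point, so p is an extreme point of co(K) fixed by H, and H
   maps co(K) into itself.  If A were not a positive real, some power B = A^n would satisfy
   Re B <= 0, and the identity B^2 - 2 Re B * B + |B|^2 = 0, whose coefficients are then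
   nonnegative, exhibits p as a convex combination of x, H^n x and H^2n x for any x in K
   other than p, contradicting extremality. *)
theory Submission
  imports Defs
begin

lemma cos_nonpos_between:
  fixes t :: real
  assumes "pi/2 \<le> t" "t \<le> 3*pi/2"
  shows "cos t \<le> 0"
proof -
  have "0 \<le> cos (t - pi)" using assms by (intro cos_ge_zero) auto
  then show ?thesis by (simp add: cos_diff)
qed

lemma ex_power_Re_nonpos:
  fixes A :: complex
  assumes "A \<noteq> 0" and "\<not> (\<exists>r::real. r > 0 \<and> A = complex_of_real r)"
  shows "\<exists>n\<ge>1. Re (A ^ n) \<le> 0"
proof -
  define \<theta> where "\<theta> = \<bar>Arg A\<bar>"
  have "Arg A \<noteq> 0"
  proof
    assume "Arg A = 0"
    then have "A = complex_of_real (cmod A)" by (metis rcis_cmod_Arg rcis_zero_arg)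
    then show False using assms by auto
  qed
  then have \<theta>: "0 < \<theta>" "\<theta> \<le> pi" using Arg_bounded[of A] by (auto simp: \<theta>_def)
  \<comment> \<open>the least n with n \<theta> \<ge> pi/2 gives n \<theta> \<in> [pi/2, pi/2 + \<theta>) \<subseteq> [pi/2, 3 pi/2]\<close>
  define n where "n = nat \<lceil>pi / (2*\<theta>)\<rceil>"
  have "0 < pi / (2*\<theta>)" using \<theta> by simp
  then have "pi / (2*\<theta>) \<le> real n" "real n < pi / (2*\<theta>) + 1"
    unfolding n_def by linarith+
  then have "0 < real n" "pi/2 \<le> real n * \<theta>" "real n * \<theta> < pi/2 + \<theta>"
    using \<open>0 < pi / (2*\<theta>)\<close> \<theta> by (linarith, auto simp: field_simps)
  then have n: "n \<ge> 1" "cos (real n * \<theta>) \<le> 0"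
    using \<theta> by (auto simp: Suc_le_eq intro!: cos_nonpos_between)
  have "cos (real n * Arg A) = cos (real n * \<theta>)"
    by (metis \<theta>_def abs_mult cos_abs_real of_nat_0_le_iff abs_of_nonneg)
  moreover have "Re (A ^ n) = cmod A ^ n * cos (real n * Arg A)"
    by (metis DeMoivre2 Re_rcis rcis_cmod_Arg)
  ultimately have "Re (A ^ n) \<le> 0" using n by (simp add: mult_nonneg_nonpos)
  then show ?thesis using n by blast
qed

lemma extreme_point_invariant_similarity_pos_real:
  fixes C :: "complex set" and p x A :: complex
  assumes "convex C" and extreme: "p extreme_point_of C" and x: "x \<in> C" "x \<noteq> p"
    and invariant: "\<forall>y\<in>C. p + A * (y - p) \<in> C" and "A \<noteq> 0"
  shows "\<exists>r::real. r > 0 \<and> A = complex_of_real r"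
proof (rule ccontr)
  assume "\<not> ?thesis"
  then obtain n where n: "n \<ge> 1" "Re (A ^ n) \<le> 0"
    using ex_power_Re_nonpos \<open>A \<noteq> 0\<close> by blast
  define B where "B = A ^ n"
  have iterate: "p + A ^ j * (y - p) \<in> C" if "y \<in> C" for j y
  proof (induction j)
    case (Suc j)
    then have "p + A * ((p + A ^ j * (y - p)) - p) \<in> C" using invariant by blast
    then show ?case by (simp add: algebra_simps)
  qed (use that in simp)
  define v where "v = x - p"
  define y1 where "y1 = p + B * v"
  define y2 where "y2 = p + B\<^sup>2 * v"
  have "y1 \<in> C" "y2 \<in> C"
    using iterate[OF x(1), of n] iterate[OF x(1), of "n*2"]
    by (simp_all add: y1_def y2_def B_def v_def power_mult[symmetric])
  moreover have "y1 \<noteq> p" "y2 \<noteq> p" "v \<noteq> 0"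
    using \<open>A \<noteq> 0\<close> x(2) by (auto simp: y1_def y2_def B_def v_def)
  ultimately have hull_avoids_p: "convex hull {x, y1, y2} \<subseteq> C - {p}"
    using x extreme \<open>convex C\<close>
    by (intro hull_minimal) (auto simp: extreme_point_of_stillconvex)
  \<comment> \<open>B is a root of the real polynomial (X - B)(X - cnj B), whose coefficients are
     nonnegative because Re B \<le> 0; this writes p as a convex combination of x, y1, y2.\<close>
  define c1 where "c1 = (cmod B)\<^sup>2"
  define c2 where "c2 = - 2 * Re B"
  define s where "s = c1 + c2 + 1"
  have root: "complex_of_real c1 + complex_of_real c2 * B + B\<^sup>2 = 0"
    using cmod_power2[of B]
    by (simp add: c1_def c2_def complex_eq_iff power2_eq_square algebra_simps)
  have "c1 > 0" "c2 \<ge> 0"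
    using \<open>A \<noteq> 0\<close> n by (auto simp: c1_def c2_def B_def)
  then have "s > 0" by (simp add: s_def)
  have "c1/s + c2/s + 1/s = 1" using \<open>s > 0\<close> by (simp add: s_def add_divide_distrib[symmetric])
  then have combination: "(c1/s) *\<^sub>R x + (c2/s) *\<^sub>R y1 + (1/s) *\<^sub>R y2 \<in> convex hull {x, y1, y2}"
    unfolding convex_hull_3 using \<open>c1 > 0\<close> \<open>c2 \<ge> 0\<close> \<open>s > 0\<close> by fastforce
  have "(c1/s) *\<^sub>R x + (c2/s) *\<^sub>R y1 + (1/s) *\<^sub>R y2
      = (complex_of_real c1 * x + complex_of_real c2 * y1 + y2) / complex_of_real s"
    by (simp add: scaleR_conv_of_real add_divide_distrib)
  also have "complex_of_real c1 * x + complex_of_real c2 * y1 + y2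
      = complex_of_real s * p + (complex_of_real c1 + complex_of_real c2 * B + B\<^sup>2) * v"
    by (simp add: y1_def y2_def v_def s_def algebra_simps)
  also have "\<dots> = complex_of_real s * p" using root by simp
  also have "complex_of_real s * p / complex_of_real s = p" using \<open>s > 0\<close> by simp
  finally have "p \<in> convex hull {x, y1, y2}" using combination by simp
  then show False using hull_avoids_p by blast
qed

lemma affine_image_convex_hull_subset:
  fixes L :: "'a::real_vector \<Rightarrow> 'a"
  assumes "linear L" and "(\<lambda>x. L x + d) ` S \<subseteq> S"
  shows "(\<lambda>x. L x + d) ` (convex hull S) \<subseteq> convex hull S"
proof -
  have "(\<lambda>x. L x + d) ` (convex hull S) = (\<lambda>y. d + y) ` L ` (convex hull S)"
    by (simp add: image_image add.commute)
  also have "\<dots> = convex hull ((\<lambda>y. d + y) ` L ` S)"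
    by (simp add: convex_hull_linear_image \<open>linear L\<close> convex_hull_translation)
  also have "\<dots> = convex hull ((\<lambda>x. L x + d) ` S)"
    by (simp add: image_image add.commute)
  also have "\<dots> \<subseteq> convex hull S" using assms(2) by (rule hull_mono)
  finally show ?thesis .
qed

lemma extreme_point_of_affine_preimage:
  fixes L :: "'a::real_vector \<Rightarrow> 'a"
  assumes "linear L" "inj L" and "(\<lambda>x. L x + d) ` S \<subseteq> S" and "p \<in> S"
    and "(L p + d) extreme_point_of S"
  shows "p extreme_point_of S"
  unfolding extreme_point_of_def
proof (intro conjI ballI notI)
  fix x y assume "x \<in> S" "y \<in> S" "p \<in> open_segment x y"
  then have "L p \<in> open_segment (L x) (L y)"
    using open_segment_linear_image[OF \<open>linear L\<close> \<open>inj L\<close>] by blast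
  then have "d + L p \<in> open_segment (d + L x) (d + L y)" by simp
  moreover have "d + L x \<in> S" "d + L y \<in> S"
    using \<open>x \<in> S\<close> \<open>y \<in> S\<close> assms(3) by (auto simp: add.commute)
  ultimately show False using assms(5) unfolding extreme_point_of_def by (metis add.commute)
qed (fact \<open>p \<in> S\<close>)

lemma affine_contraction_has_center_in:
  fixes A c :: complex and K :: "complex set"
  assumes F: "\<And>x. F x = A * x + c" and "norm A < 1"
    and "F ` K \<subseteq> K" "closed K" "K \<noteq> {}"
  shows "\<exists>p\<in>K. \<forall>y. F y = p + A * (y - p)"
proof -
  define p where "p = c / (1 - A)"
  have "A \<noteq> 1" using \<open>norm A < 1\<close> by auto
  then have "p * (1 - A) = c" by (simp add: p_def)
  then have centered: "F y = p + A * (y - p)" for y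
    by (simp add: F algebra_simps)
  then have iterates: "(F ^^ j) y = p + A ^ j * (y - p)" for j y
    by (induction j) simp_all
  obtain x where "x \<in> K" using \<open>K \<noteq> {}\<close> by blast
  then have "(F ^^ j) x \<in> K" for j
    using \<open>F ` K \<subseteq> K\<close> by (induction j) auto
  moreover have "(\<lambda>j. p + A ^ j * (x - p)) \<longlonglongrightarrow> p + 0 * (x - p)"
    by (intro tendsto_intros LIMSEQ_power_zero \<open>norm A < 1\<close>)
  ultimately have "p \<in> K"
    using \<open>closed K\<close> closed_sequentially[of K "\<lambda>j. (F ^^ j) x" p] by (simp add: iterates)
  with centered show ?thesis by blast
qed

lemma word_comp_affine: "\<exists>c. word_comp a b w n = (\<lambda>x. (\<Prod>t<n. a (w t)) * x + c)"
proof (induction n)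
  case (Suc n)
  then obtain c where "word_comp a b w n = (\<lambda>x. (\<Prod>t<n. a (w t)) * x + c)" by blast
  then show ?case
    by (intro exI[of _ "(\<Prod>t<n. a (w t)) * b (w n) + c"]) (auto simp: aff_def algebra_simps)
qed (rule exI[of _ 0], simp add: fun_eq_iff)

lemma word_comp_add:
  "word_comp a b w (n + j) = word_comp a b w n \<circ> word_comp a b (\<lambda>t. w (n + t)) j"
  by (induction j) (simp_all add: comp_assoc)

lemma word_comp_eventually_periodic:
  assumes "\<forall>n\<ge>l. w (n + k) = w n"
  shows "word_comp a b w (l + j * k) = word_comp a b w l \<circ> word_comp a b (\<lambda>t. w (l + t)) k ^^ j"
proof -
  have shift: "(\<lambda>t. w (l + j * k + t)) = (\<lambda>t. w (l + t))" for j
  proof (induction j)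
    case (Suc j)
    have "w (l + Suc j * k + t) = w (l + j * k + t)" for t
      using assms[rule_format, of "l + j * k + t"] by (simp add: algebra_simps)
    with Suc show ?case by simp
  qed simp
  show ?thesis
  proof (induction j)
    case (Suc j)
    have "word_comp a b w (l + Suc j * k) = word_comp a b w (l + j * k + k)"
      by (simp add: algebra_simps)
    also have "\<dots> = word_comp a b w (l + j * k) \<circ> word_comp a b (\<lambda>t. w (l + t)) k"
      by (simp only: word_comp_add shift)
    also have "\<dots> = word_comp a b w l \<circ> word_comp a b (\<lambda>t. w (l + t)) k ^^ Suc j"
      by (simp only: Suc funpow_Suc_right comp_assoc)
    finally show ?case .
  qed simp
qed

lemma word_comp_image_antimono:
  assumes "\<forall>i\<in>{1..m}. aff a b i ` K \<subseteq> K" and "\<forall>n. w n \<in> {1..m}" and "n \<le> n'"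
  shows "word_comp a b w n' ` K \<subseteq> word_comp a b w n ` K"
proof -
  have "word_comp a b w (Suc j) ` K \<subseteq> word_comp a b w j ` K" for j
  proof -
    have "word_comp a b w (Suc j) ` K = word_comp a b w j ` aff a b (w j) ` K"
      by (simp add: image_comp)
    also have "\<dots> \<subseteq> word_comp a b w j ` K" using assms(1,2) by (intro image_mono) blast
    finally show ?thesis .
  qed
  then show ?thesis using lift_Suc_antimono_le[of "\<lambda>j. word_comp a b w j ` K"] assms(3) by blast
qed

lemma word_comp_image_subset:
  assumes "\<forall>i\<in>{1..m}. aff a b i ` K \<subseteq> K" and "\<forall>n. w n \<in> {1..m}"
  shows "word_comp a b w n ` K \<subseteq> K"
  using word_comp_image_antimono[OF assms, of 0 n] by simp

lemma coding_of_eventually_periodic_word: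
  assumes invariant: "\<forall>i\<in>{1..m}. aff a b i ` K \<subseteq> K" and word: "\<forall>n. w n \<in> {1..m}"
    and "k \<ge> 1" and periodic: "\<forall>n\<ge>l. w (n + k) = w n" and "is_coding a b K w z"
    and "p \<in> K" and fixed: "word_comp a b (\<lambda>t. w (l + t)) k p = p"
  shows "word_comp a b w l p = z"
proof -
  have "word_comp a b w l p \<in> word_comp a b w n ` K" if "n \<ge> 1" for n
  proof -
    have "(word_comp a b (\<lambda>t. w (l + t)) k ^^ n) p = p"
      using fixed by (induction n) auto
    then have "word_comp a b w l p \<in> word_comp a b w (l + n * k) ` K"
      using \<open>p \<in> K\<close> word_comp_eventually_periodic[OF periodic, of a b n] by force
    moreover have "n \<le> l + n * k" using \<open>k \<ge> 1\<close> by (simp add: trans_le_add2)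
    ultimately show ?thesis using word_comp_image_antimono[OF invariant word] by blast
  qed
  then show ?thesis using \<open>is_coding a b K w z\<close> unfolding is_coding_def by blast
qed

lemma norm_prod_less_one:
  fixes f :: "nat \<Rightarrow> 'a::real_normed_field"
  assumes "\<forall>t<n. norm (f t) < 1" and "n \<ge> 1"
  shows "norm (\<Prod>t<n. f t) < 1"
proof -
  have "(\<Prod>t<n. norm (f t)) < (\<Prod>t<n. 1)"
    using assms by (intro prod_mono_strict[of 0]) auto
  then show ?thesis by (simp add: prod_norm)
qed

lemma word_ratio_nonzero:
  fixes a :: "nat \<Rightarrow> 'a::real_normed_field" and w :: "nat \<Rightarrow> nat"
  assumes "\<forall>i\<in>{1..m}. 0 < norm (a i) \<and> norm (a i) < 1" and "\<forall>n. w n \<in> {1..m}"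
  shows "(\<Prod>t<n. a (w t)) \<noteq> 0"
proof -
  have "a (w t) \<noteq> 0" for t using assms by (metis norm_zero order_less_irrefl)
  then show ?thesis by simp
qed

lemma word_ratio_norm_less_one:
  fixes a :: "nat \<Rightarrow> 'a::real_normed_field" and w :: "nat \<Rightarrow> nat"
  assumes "\<forall>i\<in>{1..m}. 0 < norm (a i) \<and> norm (a i) < 1" and "\<forall>n. w n \<in> {1..m}"
    and "n \<ge> 1"
  shows "norm (\<Prod>t<n. a (w t)) < 1"
  using assms by (intro norm_prod_less_one) auto

lemma word_comp_convex_hull_subset:
  assumes "\<forall>i\<in>{1..m}. aff a b i ` K \<subseteq> K" and "\<forall>n. w n \<in> {1..m}"
  shows "word_comp a b w n ` (convex hull K) \<subseteq> convex hull K"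
proof -
  obtain c where "word_comp a b w n = (\<lambda>x. (\<Prod>t<n. a (w t)) * x + c)"
    using word_comp_affine by blast
  then show ?thesis
    using word_comp_image_subset[OF assms, of n] affine_image_convex_hull_subset[OF linear_times]
    by simp
qed

lemma extreme_point_of_word_comp_preimage:
  assumes "\<forall>i\<in>{1..m}. 0 < norm (a i) \<and> norm (a i) < 1"
    and invariant: "\<forall>i\<in>{1..m}. aff a b i ` K \<subseteq> K" and word: "\<forall>n. w n \<in> {1..m}"
    and "p \<in> K" and "word_comp a b w n p extreme_point_of (convex hull K)"
  shows "p extreme_point_of (convex hull K)"
proof -
  define P where "P = (\<Prod>t<n. a (w t))"
  obtain d where affine: "word_comp a b w n = (\<lambda>x. P * x + d)"
    using word_comp_affine unfolding P_def by blast
  have "inj (\<lambda>x. P * x)"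
    using word_ratio_nonzero[OF assms(1) word] by (simp add: P_def inj_on_def)
  then show ?thesis
    using extreme_point_of_affine_preimage[OF linear_times, of P d "convex hull K" p]
      word_comp_convex_hull_subset[OF invariant word, of n] hull_inc[OF \<open>p \<in> K\<close>] assms(5)
    by (simp add: affine)
qed

theorem theorem1p1:
  fixes m :: nat and a b :: "nat \<Rightarrow> complex" and K :: "complex set"
    and w :: "nat \<Rightarrow> nat" and l k :: nat and z :: complex
  assumes "m \<ge> 1"
    and "\<forall>i\<in>{1..m}. 0 < norm (a i) \<and> norm (a i) < 1"
    and "is_attractor m a b K"
    and "\<not> (\<exists>x. K = {x})"
    and "\<forall>n. w n \<in> {1..m}"
    and "k \<ge> 1"
    and "\<forall>n\<ge>l. w (n + k) = w n"
    and "is_coding a b K w z"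
    and "z extreme_point_of (convex hull K)"
  shows "\<exists>r::real. r > 0 \<and> (\<Prod>t<k. a (w (l + t))) = complex_of_real r"
proof -
  note contracting = assms(2) and word = assms(5)
  have "K \<noteq> {}" "compact K" and invariant: "\<forall>i\<in>{1..m}. aff a b i ` K \<subseteq> K"
    using assms(3) unfolding is_attractor_def by blast+
  define v where "v = (\<lambda>t. w (l + t))"
  have period_word: "\<forall>n. v n \<in> {1..m}" using word by (simp add: v_def)
  define A where "A = (\<Prod>t<k. a (v t))"
  define H where "H = word_comp a b v k"
  obtain c where "H = (\<lambda>x. A * x + c)" using word_comp_affine unfolding H_def A_def by blast
  moreover have "norm A < 1" "A \<noteq> 0"
    using word_ratio_norm_less_one[OF contracting period_word \<open>k \<ge> 1\<close>]
      word_ratio_nonzero[OF contracting period_word] by (simp_all add: A_def)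
  moreover have "H ` K \<subseteq> K"
    using word_comp_image_subset[OF invariant period_word] by (simp add: H_def)
  ultimately obtain p where "p \<in> K" and H_centered: "\<forall>y. H y = p + A * (y - p)"
    using affine_contraction_has_center_in[of H A c K] \<open>K \<noteq> {}\<close> \<open>compact K\<close>
    by (auto intro: compact_imp_closed)
  then have "word_comp a b w l p = z"
    using coding_of_eventually_periodic_word[OF invariant word \<open>k \<ge> 1\<close> assms(7,8)]
    by (simp add: H_def v_def)
  then have "p extreme_point_of (convex hull K)"
    using extreme_point_of_word_comp_preimage[OF contracting invariant word \<open>p \<in> K\<close>] assms(9)
    by blast
  moreover obtain x where "x \<in> K" "x \<noteq> p" using \<open>p \<in> K\<close> assms(4) by blast
  moreover have "\<forall>y\<in>convex hull K. p + A * (y - p) \<in> convex hull K"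
    using word_comp_convex_hull_subset[OF invariant period_word, of k] H_centered
    by (simp add: H_def image_subset_iff flip: H_centered)
  ultimately show ?thesis
    using extreme_point_invariant_similarity_pos_real[OF convex_convex_hull _ hull_inc]
      \<open>A \<noteq> 0\<close> by (simp add: A_def v_def)
qed

end
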